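(* Let $p,q$ be positive integers and let $s_1,\dots,s_p,d_1,\dots,d_q:[0,1]\to[0,1]$ be the truth functions of the hedge connectives of FLn with many hedges; that is, writing $s_0=d_0=\mathrm{id}_{[0,1]}$, they make all hedge axioms tautologies, which means that for all $a,b\in[0,1]$: (1) $a\Rightarrow b\ \le\ h(a)\Rightarrow h(b)$ for every $h\in\{s_1,\dots,s_p,d_1,\dots,d_q\}$; (2) $s_i(a)\le s_{i-1}(a)$ for $i=1,\dots,p$; (3) $s_p(1)=1$; (4) $d_{j-1}(a)\le d_j(a)$ for $j=1,\dots,q$; (5) $d_q(0)=0$. Then for every $h\in\{s_1,\dots,s_p,d_1,\dots,d_q\}$, $h$ is non-decreasing, $h(0)=0$ and $h(1)=1$.
   Context: Truth values form the Łukasiewicz algebra on $[0,1]$ with $a\Rightarrow b=\min(1,1-a+b)$. FLn with many hedges extends the first-order fuzzy logic FLn (with logical constants $\overline{a}$ for every $a\in[0,1]$, implication $\to$, negation $\neg A\equiv A\to\overline{0}$) by unary connectives $s_1,\dots,s_p$ (truth-stressing hedges) and $d_1,\dots,d_q$ (truth-depressing hedges), with $s_0,d_0$ denoting the identity connective, and adds the logical axioms (in degree 1) $(A\to B)\to(hA\to hB)$ for all hedges $h$; $s_iA\to s_{i-1}A$ ($i=1,\dots,p$); $s_p\overline{1}$; $d_{j-1}A\to d_jA$ ($j=1,\dots,q$); $\neg d_q\overline{0}$. Conditions (1)–(5) are exactly the requirement that these axioms take truth value 1 in every structure, where a hedge $h$ is interpreted by its truth function: $\mathcal{D}(hA)=h(\mathcal{D}(A))$.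 *)

theory Defs
  imports Complex_Main
begin

definition luk_imp :: "real \<Rightarrow> real \<Rightarrow> real" where
  "luk_imp a b = min 1 (1 - a + b)"

end

theory Submission
  imports Defs
begin

(* A map preserving the Lukasiewicz residuum is monotone, because a <= b forces the residuum
   to be 1. The stressing hedges form a descending chain below the identity s_0, the depressing
   ones an ascending chain above d_0; hence s_i 0 <= s_0 0 = 0 and 1 = s_p 1 <= s_i 1, and
   dually d_i 0 <= d_q 0 = 0 and 1 = d_0 1 <= d_i 1. *)

lemma luk_imp_eq_1_iff: "luk_imp a b = 1 \<longleftrightarrow> a \<le> b"
  by (auto simp add: luk_imp_def min_def)

lemma mono_on_if_luk_imp_le:
  assumes "\<And>a b. a \<in> S \<Longrightarrow> b \<in> S \<Longrightarrow> luk_imp a b \<le> luk_imp (h a) (h b)"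
  shows "mono_on S h"
proof (rule mono_onI)
  fix a b assume "a \<in> S" "b \<in> S" "a \<le> b"
  then have "1 \<le> luk_imp (h a) (h b)"
    using assms by (metis luk_imp_eq_1_iff)
  then show "h a \<le> h b"
    by (simp add: luk_imp_def)
qed

lemma chain_le_ascending:
  fixes f :: "nat \<Rightarrow> 'a::preorder"
  assumes "\<And>n. n \<in> {1..m} \<Longrightarrow> f (n - 1) \<le> f n" and "k \<le> j" and "j \<le> m"
  shows "f k \<le> f j"
  using assms(2,3)
proof (induction j rule: dec_induct)
  case (step n)
  then show ?case
    using assms(1)[of "Suc n"] order_trans by auto
qed simp

lemma chain_le_descending:
  fixes f :: "nat \<Rightarrow> 'a::preorder"
  assumes "\<And>n. n \<in> {1..m} \<Longrightarrow> f n \<le> f (n - 1)" and "k \<le> j" and "j \<le> m"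
  shows "f j \<le> f k"
  using assms(2,3)
proof (induction j rule: dec_induct)
  case (step n)
  then show ?case
    using assms(1)[of "Suc n"] order_trans by auto
qed simp

theorem mainTheorem1:
  fixes p q :: nat and s d :: "nat \<Rightarrow> real \<Rightarrow> real"
  assumes "p \<ge> 1" and "q \<ge> 1"
    and s0: "\<And>a. a \<in> {0..1} \<Longrightarrow> s 0 a = a"
    and d0: "\<And>a. a \<in> {0..1} \<Longrightarrow> d 0 a = a"
    and s_range: "\<And>i a. i \<in> {1..p} \<Longrightarrow> a \<in> {0..1} \<Longrightarrow> s i a \<in> {0..1}"
    and d_range: "\<And>j a. j \<in> {1..q} \<Longrightarrow> a \<in> {0..1} \<Longrightarrow> d j a \<in> {0..1}"
    and ax1s: "\<And>i a b. i \<in> {1..p} \<Longrightarrow> a \<in> {0..1} \<Longrightarrow> b \<in> {0..1} \<Longrightarrow>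
                 luk_imp a b \<le> luk_imp (s i a) (s i b)"
    and ax1d: "\<And>j a b. j \<in> {1..q} \<Longrightarrow> a \<in> {0..1} \<Longrightarrow> b \<in> {0..1} \<Longrightarrow>
                 luk_imp a b \<le> luk_imp (d j a) (d j b)"
    and ax2: "\<And>i a. i \<in> {1..p} \<Longrightarrow> a \<in> {0..1} \<Longrightarrow> s i a \<le> s (i - 1) a"
    and ax3: "s p 1 = 1"
    and ax4: "\<And>j a. j \<in> {1..q} \<Longrightarrow> a \<in> {0..1} \<Longrightarrow> d (j - 1) a \<le> d j a"
    and ax5: "d q 0 = 0"
  shows "(\<forall>i \<in> {1..p}. mono_on {0..1} (s i) \<and> s i 0 = 0 \<and> s i 1 = 1) \<and>
         (\<forall>j \<in> {1..q}. mono_on {0..1} (d j) \<and> d j 0 = 0 \<and> d j 1 = 1)"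
proof (intro conjI ballI)
  fix i assume i: "i \<in> {1..p}"
  have s_chain: "s j a \<le> s k a" if "k \<le> j" "j \<le> p" "a \<in> {0..1}" for j k a
    using chain_le_descending[where f = "\<lambda>n. s n a"] ax2 that by blast
  show "mono_on {0..1} (s i)"
    using ax1s[OF i] by (rule mono_on_if_luk_imp_le)
  show "s i 0 = 0"
    using s_chain[of 0 i 0] s0[of 0] s_range[OF i, of 0] i by auto
  show "s i 1 = 1"
    using s_chain[of i p 1] ax3 s_range[OF i, of 1] i by auto
next
  fix j assume j: "j \<in> {1..q}"
  have d_chain: "d k a \<le> d l a" if "k \<le> l" "l \<le> q" "a \<in> {0..1}" for l k a
    using chain_le_ascending[where f = "\<lambda>n. d n a"] ax4 that by blast
  show "mono_on {0..1} (d j)"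
    using ax1d[OF j] by (rule mono_on_if_luk_imp_le)
  show "d j 0 = 0"
    using d_chain[of j q 0] ax5 d_range[OF j, of 0] j by auto
  show "d j 1 = 1"
    using d_chain[of 0 j 1] d0[of 1] d_range[OF j, of 1] j by auto
qed

end
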